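(* Let $H=E+D$ and $K=E'+D'$ be closed additive subgroups of $\mathbb{R}^{n}$ (with decompositions as in the context) and let $f:H\to K$ be a homomorphism of closed additive groups. (i) If $f$ is injective, then $f:H\to f(H)$ is an isomorphism of closed additive groups. (ii) If $f$ is surjective and $F$ is a closed additive subgroup which is a supplement of $\mathrm{Ker}(f)$ in $H$ with defect $0$, then the restriction $f_{|F}:F\to K$ is an isomorphism of closed additive groups; moreover $\Re(\widetilde{\mathrm{dim}}(K))=\Re(\widetilde{\mathrm{dim}}(H))-\Re(\widetilde{\mathrm{dim}}(\mathrm{Ker}(f)))$.
   Context: Every closed additive subgroup $G$ of $\mathbb{R}^n$ can be written $G=E+D$ with $E$ a vector subspace and $D$ a discrete additive subgroup with $E\cap\mathrm{vect}(D)=\{0\}$ ($\mathrm{vect}$ = real span). For closed subgroups with such decompositions $G_1=E_1+D_1$, $G_2=E_2+D_2$, a map $g:G_1\to G_2$ is a homomorphism of closed additive groups if there are a linear map $g_1:E_1\to E_2$ and a group homomorphism $g_2:D_1\to D_2$ with $g(\lambda x+py)=\lambda g_1(x)+pg_2(y)$ for all $\lambda\in\mathbb{R}$, $p\in\mathbb{Z}$, $x\in E_1$, $y\in D_1$; it is an isomorphism of closed additive groups if it is invertible (with inverse of the same kind). Complex dimension: for an additive subgroup $G$, $\widetilde{\mathrm{dim}}(G):=p+i(q-p)$ with $p=\max\{\dim V: V\text{ a vector subspace},\ V\subset G\}$, $q=\dim\mathrm{vect}(G)$. A subgroup $F\subset H$ is a supplement of $\mathrm{Ker}(f)$ in $H$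 with defect $0$ if $F+\mathrm{Ker}(f)=H$, $\Re(\widetilde{\mathrm{dim}}(F\cap\mathrm{Ker}(f)))=0$ and $\Im(\widetilde{\mathrm{dim}}(F\cap\mathrm{Ker}(f)))=0$. *)

theory Defs
  imports "HOL-Analysis.Analysis"
begin

definition add_subgroup :: "'a::real_vector set \<Rightarrow> bool" where
  "add_subgroup G \<longleftrightarrow> 0 \<in> G \<and> (\<forall>x\<in>G. \<forall>y\<in>G. x + y \<in> G) \<and> (\<forall>x\<in>G. - x \<in> G)"

definition closed_add_subgroup :: "'a::real_normed_vector set \<Rightarrow> bool" where
  "closed_add_subgroup G \<longleftrightarrow> closed G \<and> add_subgroup G"

definition dsum :: "'a::real_vector set \<Rightarrow> 'a set \<Rightarrow> 'a set" where
  "dsum E D = {x + y | x y. x \<in> E \<and> y \<in> D}"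

definition closed_decomp :: "'a::euclidean_space set \<Rightarrow> 'a set \<Rightarrow> 'a set \<Rightarrow> bool" where
  "closed_decomp G E D \<longleftrightarrow> subspace E \<and> add_subgroup D \<and> discrete D
     \<and> E \<inter> span D = {0} \<and> G = dsum E D"

definition closed_hom :: "'a::euclidean_space set \<Rightarrow> 'a set \<Rightarrow> 'a set \<Rightarrow> 'a set \<Rightarrow> ('a \<Rightarrow> 'a) \<Rightarrow> bool" where
  "closed_hom E1 D1 E2 D2 g \<longleftrightarrow> (\<exists>g1 g2.
      (\<forall>x\<in>E1. g1 x \<in> E2)
    \<and> (\<forall>x\<in>E1. \<forall>y\<in>E1. \<forall>c::real. g1 (x + y) = g1 x + g1 y \<and> g1 (c *\<^sub>R x) = c *\<^sub>R g1 x)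
    \<and> (\<forall>y\<in>D1. g2 y \<in> D2)
    \<and> (\<forall>y\<in>D1. \<forall>z\<in>D1. g2 (y + z) = g2 y + g2 z)
    \<and> (\<forall>(c::real) x (p::int) y. x \<in> E1 \<longrightarrow> y \<in> D1 \<longrightarrow>
          g (c *\<^sub>R x + of_int p *\<^sub>R y) = c *\<^sub>R g1 x + of_int p *\<^sub>R g2 y))"

definition closed_iso :: "'a::euclidean_space set \<Rightarrow> 'a set \<Rightarrow> 'a set \<Rightarrow> 'a set \<Rightarrow> ('a \<Rightarrow> 'a) \<Rightarrow> bool" where
  "closed_iso E1 D1 E2 D2 g \<longleftrightarrow> closed_hom E1 D1 E2 D2 g \<and>
     (\<exists>h. closed_hom E2 D2 E1 D1 h \<and> (\<forall>x\<in>dsum E1 D1. h (g x) = x)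
          \<and> (\<forall>y\<in>dsum E2 D2. g (h y) = y))"

definition cdim :: "'a::euclidean_space set \<Rightarrow> complex" where
  "cdim G = (let p = Max {dim V | V. subspace V \<and> V \<subseteq> G}; q = dim (span G)
             in Complex (real p) (real q - real p))"

definition kernel_on :: "'a set \<Rightarrow> ('a \<Rightarrow> 'b::zero) \<Rightarrow> 'a set" where
  "kernel_on H f = {x \<in> H. f x = 0}"

definition supplement_defect0 :: "'a::euclidean_space set \<Rightarrow> 'a set \<Rightarrow> 'a set \<Rightarrow> bool" where
  "supplement_defect0 F N H \<longleftrightarrow> F \<subseteq> H \<and> dsum F N = H
     \<and> Re (cdim (F \<inter> N)) = 0 \<and> Im (cdim (F \<inter> N)) = 0"

end

theory Submission
  imports Defs
begin

text \<open>
  The two components of a homomorphism of closed groups \<open>E + D \<rightarrow> E' + D'\<close> are just the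
  restrictions of \<open>f\<close> to \<open>E\<close> and to \<open>D\<close>, so \<open>f\<close> is an additive map that is linear on \<open>E\<close>.
  For (i), \<open>f(H) = f(E) + f(D)\<close> is again such a decomposition, because \<open>f(D) \<subseteq> D'\<close> is discrete and
  \<open>f(E) \<inter> span f(D) \<subseteq> E' \<inter> span D' = 0\<close>; the inverse map inherits both components.

  For (ii), defect 0 means \<open>F \<inter> ker f = 0\<close>, so \<open>f\<close> restricts to a bijection \<open>F \<rightarrow> K\<close>, and the
  decomposition of \<open>K\<close> is pulled back to \<open>F = (F \<inter> f\<^sup>-\<^sup>1 E') + (F \<inter> f\<^sup>-\<^sup>1 D')\<close>. An element of the
  first summand is divisible within \<open>F \<subseteq> E + D\<close>, and small elements of \<open>E + D\<close> lie in \<open>E\<close>, so the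
  summand lies in \<open>E\<close>; closedness of \<open>F\<close> then makes it a vector space. The real part of the
  complex dimension of \<open>E + D\<close> is \<open>dim E\<close>, and \<open>E = (F \<inter> f\<^sup>-\<^sup>1 E') \<oplus> (E \<inter> ker f)\<close> with the first
  summand mapped isomorphically onto \<open>E'\<close>, which gives the dimension formula.
\<close>

section \<open>Additive subgroups and additive maps\<close>

definition additive_on :: "'a::ab_group_add set \<Rightarrow> ('a \<Rightarrow> 'b::ab_group_add) \<Rightarrow> bool" where
  "additive_on S g \<longleftrightarrow> (\<forall>x\<in>S. \<forall>y\<in>S. g (x + y) = g x + g y)"

lemma add_subgroup_0: "add_subgroup G \<Longrightarrow> 0 \<in> G"
  unfolding add_subgroup_def by blast

lemma add_subgroup_add: "add_subgroup G \<Longrightarrow> x \<in> G \<Longrightarrow> y \<in> G \<Longrightarrow> x + y \<in> G"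
  unfolding add_subgroup_def by blast

lemma add_subgroup_uminus: "add_subgroup G \<Longrightarrow> x \<in> G \<Longrightarrow> - x \<in> G"
  unfolding add_subgroup_def by blast

lemma add_subgroup_diff: "add_subgroup G \<Longrightarrow> x \<in> G \<Longrightarrow> y \<in> G \<Longrightarrow> x - y \<in> G"
  using add_subgroup_add add_subgroup_uminus by (metis diff_conv_add_uminus)

lemma subspace_imp_add_subgroup: "subspace S \<Longrightarrow> add_subgroup S"
  unfolding add_subgroup_def by (simp add: subspace_0 subspace_add subspace_neg)

lemma add_subgroup_scaleR_nat:
  assumes "add_subgroup G" "x \<in> G" shows "of_nat n *\<^sub>R x \<in> G"
proof (induction n)
  case (Suc n)
  then show ?case using add_subgroup_add[OF assms(1) assms(2)] by (simp add: scaleR_left_distrib)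
qed (use add_subgroup_0[OF assms(1)] in simp)

lemma add_subgroup_scaleR_int:
  assumes "add_subgroup G" "x \<in> G" shows "of_int p *\<^sub>R x \<in> G"
proof (cases p rule: int_cases)
  case (neg n)
  then show ?thesis
    using add_subgroup_uminus[OF assms(1) add_subgroup_scaleR_nat[OF assms, of "Suc n"]]
    by (simp only: of_int_minus of_int_of_nat_eq scaleR_minus_left)
qed (use add_subgroup_scaleR_nat[OF assms] in simp)

lemma additive_on_subset: "additive_on T g \<Longrightarrow> S \<subseteq> T \<Longrightarrow> additive_on S g"
  unfolding additive_on_def by blast

lemma additive_on_0:
  assumes "add_subgroup G" "additive_on G g" shows "g 0 = 0"
  using assms unfolding add_subgroup_def additive_on_def by (metis add_0 add_cancel_left_right)

lemma additive_on_diff: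
  assumes "add_subgroup G" "additive_on G g" "x \<in> G" "y \<in> G"
  shows "g (x - y) = g x - g y"
proof -
  have "g (x - y) + g y = g x"
    using assms add_subgroup_diff[OF assms(1)] unfolding additive_on_def by (metis diff_add_cancel)
  then show ?thesis by (simp add: eq_diff_eq)
qed

lemma additive_on_uminus:
  assumes "add_subgroup G" "additive_on G g" "x \<in> G" shows "g (- x) = - g x"
  using additive_on_diff[OF assms(1,2) add_subgroup_0[OF assms(1)] assms(3)] additive_on_0[OF assms(1,2)]
  by simp

lemma add_subgroup_image:
  fixes g :: "'a::real_vector \<Rightarrow> 'b::real_vector"
  assumes G: "add_subgroup G" and g: "additive_on G g" shows "add_subgroup (g ` G)"
  unfolding add_subgroup_def
proof (intro conjI ballI)
  show "0 \<in> g ` G" using additive_on_0[OF G g] add_subgroup_0[OF G] by (metis image_eqI)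
next
  fix x y assume "x \<in> g ` G" "y \<in> g ` G"
  then obtain a b where "a \<in> G" "b \<in> G" "x = g a" "y = g b" by blast
  moreover then have "a + b \<in> G" using add_subgroup_add[OF G] by blast
  ultimately show "x + y \<in> g ` G" using g unfolding additive_on_def by (metis image_eqI)
next
  fix x assume "x \<in> g ` G"
  then obtain a where "a \<in> G" "x = g a" by blast
  then show "- x \<in> g ` G"
    using additive_on_uminus[OF G g] add_subgroup_uminus[OF G] by (metis image_eqI)
qed

lemma add_subgroup_Int_vimage:
  fixes g :: "'a::real_vector \<Rightarrow> 'b::real_vector"
  assumes G: "add_subgroup G" and g: "additive_on G g" and B: "add_subgroup B"
  shows "add_subgroup (G \<inter> g -` B)"
  unfolding add_subgroup_def
proof (intro conjI ballI)
  show "0 \<in> G \<inter> g -` B" using add_subgroup_0[OF G] add_subgroup_0[OF B] additive_on_0[OF G g] by simp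
next
  fix x y assume "x \<in> G \<inter> g -` B" "y \<in> G \<inter> g -` B"
  then show "x + y \<in> G \<inter> g -` B"
    using g add_subgroup_add[OF G] add_subgroup_add[OF B] unfolding additive_on_def by simp
next
  fix x assume "x \<in> G \<inter> g -` B"
  then show "- x \<in> G \<inter> g -` B"
    using additive_on_uminus[OF G g] add_subgroup_uminus[OF G] add_subgroup_uminus[OF B] by simp
qed

lemma additive_on_scaleR_nat:
  fixes g :: "'a::real_vector \<Rightarrow> 'b::real_vector"
  assumes "add_subgroup G" "additive_on G g" "x \<in> G"
  shows "g (of_nat n *\<^sub>R x) = of_nat n *\<^sub>R g x"
proof (induction n)
  case 0
  show ?case using additive_on_0[OF assms(1,2)] by simp
next
  case (Suc n)
  have "g (of_nat (Suc n) *\<^sub>R x) = g (of_nat n *\<^sub>R x) + g x"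
    using assms add_subgroup_scaleR_nat[OF assms(1,3), of n]
    unfolding additive_on_def by (simp add: scaleR_left_distrib)
  then show ?case using Suc by (simp add: scaleR_left_distrib)
qed

lemma additive_on_scaleR_int:
  fixes g :: "'a::real_vector \<Rightarrow> 'b::real_vector"
  assumes "add_subgroup G" "additive_on G g" "x \<in> G"
  shows "g (of_int p *\<^sub>R x) = of_int p *\<^sub>R g x"
proof (cases p rule: int_cases)
  case (neg n)
  then have "g (of_int p *\<^sub>R x) = g (- (of_nat (Suc n) *\<^sub>R x))"
    by (simp only: of_int_minus of_int_of_nat_eq scaleR_minus_left)
  also have "\<dots> = - (of_nat (Suc n) *\<^sub>R g x)"
    using additive_on_uminus[OF assms(1,2) add_subgroup_scaleR_nat[OF assms(1,3), of "Suc n"]]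
      additive_on_scaleR_nat[OF assms, of "Suc n"] by (simp only:)
  finally show ?thesis using neg by (simp only: of_int_minus of_int_of_nat_eq scaleR_minus_left)
qed (use additive_on_scaleR_nat[OF assms] in simp)

lemma additive_on_inj_on_iff:
  assumes "add_subgroup G" "additive_on G g"
  shows "inj_on g G \<longleftrightarrow> (\<forall>x\<in>G. g x = 0 \<longrightarrow> x = 0)"
  using additive_on_diff[OF assms] additive_on_0[OF assms] add_subgroup_diff[OF assms(1)] assms(1)
  unfolding inj_on_def add_subgroup_def by (metis eq_iff_diff_eq_0)

lemma closed_add_subgroup_divisible_imp_scaleR:
  fixes F :: "'a::real_normed_vector set"
  assumes F: "closed_add_subgroup F" and "z \<in> F"
    and div: "\<And>m::nat. m > 0 \<Longrightarrow> (1 / real m) *\<^sub>R z \<in> F"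
  shows "c *\<^sub>R z \<in> F"
proof -
  have G: "add_subgroup F" and "closed F" using F unfolding closed_add_subgroup_def by auto
  have "t *\<^sub>R z \<in> F" if tQ: "t \<in> \<rat>" for t
  proof -
    obtain p q :: int where "q > 0" "t = of_int p / of_int q" using Rats_cases'[OF tQ] by metis
    then obtain m :: nat where "m > 0" "t = of_int p / of_nat m" by (metis of_int_of_nat_eq pos_int_cases)
    then have "t *\<^sub>R z = of_int p *\<^sub>R ((1 / real m) *\<^sub>R z)" by simp
    then show ?thesis using add_subgroup_scaleR_int[OF G div[OF \<open>m > 0\<close>]] by (simp only:)
  qed
  moreover have "closed ((\<lambda>t. t *\<^sub>R z) -` F)"
    using \<open>closed F\<close> by (intro continuous_closed_vimage) (auto intro!: continuous_intros)
  ultimately have "closure \<rat> \<subseteq> (\<lambda>t. t *\<^sub>R z) -` F" by (intro closure_minimal) auto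
  then show ?thesis by (simp add: Rats_closure_real subset_eq)
qed

lemma discrete_add_subgroup_iff:
  fixes G :: "'a::real_normed_vector set"
  assumes "add_subgroup G"
  shows "discrete G \<longleftrightarrow> (\<exists>e>0. \<forall>x\<in>G. norm x < e \<longrightarrow> x = 0)"
proof
  assume "discrete G"
  moreover have "0 \<in> G" using add_subgroup_0[OF assms] .
  ultimately obtain e where "e > 0" "\<And>y. y \<in> G \<Longrightarrow> dist 0 y < e \<Longrightarrow> y = 0"
    unfolding discrete_def by (meson isolated_inE_dist)
  then show "\<exists>e>0. \<forall>x\<in>G. norm x < e \<longrightarrow> x = 0" by (auto simp: dist_norm)
next
  assume "\<exists>e>0. \<forall>x\<in>G. norm x < e \<longrightarrow> x = 0"
  then obtain e where e: "e > 0" "\<And>x. x \<in> G \<Longrightarrow> norm x < e \<Longrightarrow> x = 0" by blast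
  have "uniform_discrete G"
  proof (rule uniformI1[OF e(1)])
    fix x y assume "x \<in> G" "y \<in> G" "dist x y < e"
    then show "x = y" using e(2)[of "x - y"] add_subgroup_diff[OF assms] by (simp add: dist_norm)
  qed
  then show "discrete G" by (rule uniform_discrete_imp_discrete)
qed

lemma discrete_add_subgroup_imp_closed:
  fixes G :: "'a::real_normed_vector set"
  assumes "add_subgroup G" "discrete G" shows "closed G"
proof -
  obtain e where e: "e > 0" "\<And>x. x \<in> G \<Longrightarrow> norm x < e \<Longrightarrow> x = 0"
    using assms(2) unfolding discrete_add_subgroup_iff[OF assms(1)] by blast
  show ?thesis
  proof (rule discrete_imp_closed[OF e(1)], intro ballI impI)
    fix x y assume "x \<in> G" "y \<in> G" "dist y x < e"
    then show "y = x" using e(2)[of "y - x"] add_subgroup_diff[OF assms(1)] by (simp add: dist_norm)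
  qed
qed

section \<open>Sums of subgroups\<close>

lemma dsumI: "a \<in> A \<Longrightarrow> b \<in> B \<Longrightarrow> a + b \<in> dsum A B"
  unfolding dsum_def by blast

lemma dsumE:
  assumes "x \<in> dsum A B" obtains a b where "a \<in> A" "b \<in> B" "x = a + b"
  using assms unfolding dsum_def by blast

lemma add_subgroup_dsum:
  assumes A: "add_subgroup A" and B: "add_subgroup B" shows "add_subgroup (dsum A B)"
  unfolding add_subgroup_def
proof (intro conjI ballI)
  show "0 \<in> dsum A B"
    using dsumI[of 0 A 0 B] A B unfolding add_subgroup_def by simp
next
  fix x y assume "x \<in> dsum A B" "y \<in> dsum A B"
  then obtain a b a' b' where ab: "a \<in> A" "b \<in> B" "a' \<in> A" "b' \<in> B" "x = a + b" "y = a' + b'"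
    by (metis dsumE)
  have "(a + a') + (b + b') \<in> dsum A B"
    using ab A B unfolding add_subgroup_def by (intro dsumI) simp_all
  moreover have "x + y = (a + a') + (b + b')" using ab by (simp add: algebra_simps)
  ultimately show "x + y \<in> dsum A B" by simp
next
  fix x assume "x \<in> dsum A B"
  then obtain a b where ab: "a \<in> A" "b \<in> B" "x = a + b" by (rule dsumE)
  have "- a + - b \<in> dsum A B"
    using ab A B unfolding add_subgroup_def by (intro dsumI) simp_all
  then show "- x \<in> dsum A B" using ab by simp
qed

lemma dsum_superset:
  assumes "subspace E" "add_subgroup D" shows "E \<subseteq> dsum E D" "D \<subseteq> dsum E D"
  using dsumI[of _ E 0 D] dsumI[of 0 E _ D] assms unfolding add_subgroup_def
  by (auto simp: subspace_0)

lemma image_dsum: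
  assumes g: "additive_on (dsum A B) g" and "subspace A" "add_subgroup B"
  shows "g ` dsum A B = dsum (g ` A) (g ` B)"
proof -
  have add: "g (a + b) = g a + g b" if "a \<in> A" "b \<in> B" for a b
  proof -
    have "a \<in> dsum A B" "b \<in> dsum A B"
      using that dsum_superset[OF assms(2,3)] by blast+
    then show ?thesis using g unfolding additive_on_def by blast
  qed
  show ?thesis
  proof (intro equalityI subsetI)
    fix y assume "y \<in> g ` dsum A B"
    then obtain a b where "a \<in> A" "b \<in> B" "y = g (a + b)" by (auto elim: dsumE)
    then show "y \<in> dsum (g ` A) (g ` B)" using add by (simp add: dsumI)
  next
    fix y assume "y \<in> dsum (g ` A) (g ` B)"
    then obtain a b where "a \<in> A" "b \<in> B" "y = g a + g b" by (auto elim: dsumE)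
    then have "y = g (a + b)" using add by simp
    then show "y \<in> g ` dsum A B" using \<open>a \<in> A\<close> \<open>b \<in> B\<close> by (simp add: dsumI)
  qed
qed

lemma add_subgroup_sum_unique:
  assumes A: "add_subgroup A" and B: "add_subgroup B" and AB: "A \<inter> B = {0}"
    and "a \<in> A" "a' \<in> A" "b \<in> B" "b' \<in> B" and eq: "a + b = a' + b'"
  shows "a = a' \<and> b = b'"
proof -
  have "a - a' = b' - b" using eq by (simp add: algebra_simps)
  moreover have "a - a' \<in> A" "b' - b \<in> B"
    using add_subgroup_diff[OF A] add_subgroup_diff[OF B] assms(4-7) by simp_all
  ultimately have "a - a' \<in> A \<inter> B" by simp
  then have "a = a'" using AB by simp
  then show ?thesis using eq by simp
qed

lemma linear_extension_on_subspace:
  fixes g :: "'a::euclidean_space \<Rightarrow> 'b::euclidean_space"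
  assumes S: "subspace S"
    and add: "\<And>x y. x \<in> S \<Longrightarrow> y \<in> S \<Longrightarrow> g (x + y) = g x + g y"
    and scale: "\<And>c x. x \<in> S \<Longrightarrow> g (c *\<^sub>R x) = c *\<^sub>R g x"
  obtains L where "linear L" "\<And>x. x \<in> S \<Longrightarrow> L x = g x"
proof -
  obtain B where B: "B \<subseteq> S" "independent B" "S \<subseteq> span B" by (rule basis_exists)
  obtain L where L: "linear L" "\<forall>x\<in>B. L x = g x" using linear_independent_extend[OF B(2)] by blast
  have "x \<in> S \<and> L x = g x" if "x \<in> span B" for x
    using that
  proof (induction rule: span_induct)
    case base
    have "g 0 = 0" using scale[of 0 0] S by (simp add: subspace_0)
    then show ?case
      unfolding subspace_def
      using S L(1) add scale by (auto simp: subspace_0 subspace_add subspace_scale linear_0 linear_add linear_scale)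
  next
    case (step x)
    then show ?case using B L by auto
  qed
  then show ?thesis using that L(1) B(3) by blast
qed

lemma linear_projection_exists:
  fixes E S :: "'a::euclidean_space set"
  assumes E: "subspace E" and S: "subspace S" and ES: "E \<inter> S = {0}"
  obtains P where "linear P" "\<And>e s. e \<in> E \<Longrightarrow> s \<in> S \<Longrightarrow> P (e + s) = s"
proof -
  define g where "g x = (SOME s. s \<in> S \<and> (\<exists>e\<in>E. x = e + s))" for x
  have g: "g (e + s) = s" if "e \<in> E" "s \<in> S" for e s
    unfolding g_def
  proof (rule some_equality)
    fix s' assume "s' \<in> S \<and> (\<exists>e'\<in>E. e + s = e' + s')"
    then obtain e' where "e' \<in> E" "s' \<in> S" "e + s = e' + s'" by blast
    then show "s' = s"
      using add_subgroup_sum_unique[OF subspace_imp_add_subgroup[OF E] subspace_imp_add_subgroup[OF S] ES]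
        that by blast
  qed (use that in auto)
  have T: "subspace (dsum E S)" unfolding dsum_def using E S by (rule subspace_sums)
  have add: "g (x + y) = g x + g y" if xy: "x \<in> dsum E S" "y \<in> dsum E S" for x y
  proof -
    obtain e s e' s' where es: "e \<in> E" "s \<in> S" "e' \<in> E" "s' \<in> S" "x = e + s" "y = e' + s'"
      using xy unfolding dsum_def by blast
    have "x + y = (e + e') + (s + s')" using es by (simp add: algebra_simps)
    moreover have "e + e' \<in> E" "s + s' \<in> S" using es E S by (simp_all add: subspace_add)
    ultimately have "g (x + y) = s + s'" using g by (simp only:)
    then show ?thesis using es g by simp
  qed
  have scale: "g (c *\<^sub>R x) = c *\<^sub>R g x" if x: "x \<in> dsum E S" for c x
  proof -
    obtain e s where es: "e \<in> E" "s \<in> S" "x = e + s" using x unfolding dsum_def by blast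
    have "c *\<^sub>R x = c *\<^sub>R e + c *\<^sub>R s" using es by (simp add: algebra_simps)
    moreover have "c *\<^sub>R e \<in> E" "c *\<^sub>R s \<in> S" using es E S by (simp_all add: subspace_scale)
    ultimately have "g (c *\<^sub>R x) = c *\<^sub>R s" using g by (simp only:)
    then show ?thesis using es g by simp
  qed
  obtain L where L: "linear L" "\<And>x. x \<in> dsum E S \<Longrightarrow> L x = g x"
    using linear_extension_on_subspace[OF T add scale] by blast
  show ?thesis
  proof (rule that[OF L(1)])
    fix e s assume "e \<in> E" "s \<in> S"
    then have "e + s \<in> dsum E S" unfolding dsum_def by blast
    show "L (e + s) = s" using L(2)[OF \<open>e + s \<in> dsum E S\<close>] g[OF \<open>e \<in> E\<close> \<open>s \<in> S\<close>] by (rule trans)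
  qed
qed

section \<open>Decompositions of closed subgroups\<close>

lemma closed_decompD:
  assumes "closed_decomp G E D"
  shows "subspace E" "add_subgroup D" "discrete D" "E \<inter> span D = {0}" "G = dsum E D"
  using assms unfolding closed_decomp_def by auto

lemma closed_decomp_add_subgroup: "closed_decomp G E D \<Longrightarrow> add_subgroup G"
  using closed_decompD add_subgroup_dsum subspace_imp_add_subgroup by metis

lemma closed_decomp_subset: "closed_decomp G E D \<Longrightarrow> E \<subseteq> G \<and> D \<subseteq> G"
  using closed_decompD dsum_superset by metis

lemma closed_decomp_sum_unique:
  assumes "closed_decomp G E D" "a \<in> E" "a' \<in> E" "b \<in> span D" "b' \<in> span D" "a + b = a' + b'"
  shows "a = a' \<and> b = b'"
  using add_subgroup_sum_unique[OF subspace_imp_add_subgroup subspace_imp_add_subgroup] assms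
    closed_decompD(1,4)[OF assms(1)] subspace_span by metis

lemma closed_decomp_subspace_Int_eq_0:
  assumes "closed_decomp G E D" "x \<in> E" "x \<in> D" shows "x = 0"
  using closed_decompD(4)[OF assms(1)] assms(2,3) span_base by blast

lemma closed_decomp_projection:
  assumes "closed_decomp G E D"
  obtains P where "linear P" "\<And>e s. e \<in> E \<Longrightarrow> s \<in> span D \<Longrightarrow> P (e + s) = s"
  using linear_projection_exists[OF closed_decompD(1) subspace_span closed_decompD(4)] assms by metis

lemma closed_decomp_imp_closed:
  assumes dec: "closed_decomp G E D" shows "closed G"
proof -
  note E = closed_decompD(1)[OF dec] and D = closed_decompD(2,3)[OF dec]
  obtain P where P: "linear P" "\<And>e s. e \<in> E \<Longrightarrow> s \<in> span D \<Longrightarrow> P (e + s) = s"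
    using closed_decomp_projection[OF dec] by blast
  have "G = dsum E (span D) \<inter> P -` D"
    using closed_decompD(5)[OF dec] P(2) span_base unfolding dsum_def by fastforce
  moreover have "closed (dsum E (span D))"
    unfolding dsum_def using E subspace_span by (intro closed_subspace subspace_sums)
  moreover have "closed (P -` D)"
    using discrete_add_subgroup_imp_closed[OF D] linear_continuous_on[of P UNIV] P(1)
    by (simp add: continuous_closed_vimage linear_conv_bounded_linear linear_continuous_at)
  ultimately show ?thesis by (simp add: closed_Int)
qed

lemma closed_decomp_imp_closed_add_subgroup: "closed_decomp G E D \<Longrightarrow> closed_add_subgroup G"
  unfolding closed_add_subgroup_def by (simp add: closed_decomp_imp_closed closed_decomp_add_subgroup)

lemma closed_decomp_small_imp_mem:
  assumes dec: "closed_decomp G E D"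
  obtains \<epsilon> where "\<epsilon> > 0" "\<And>z. z \<in> G \<Longrightarrow> norm z < \<epsilon> \<Longrightarrow> z \<in> E"
proof -
  \<comment> \<open>The projection onto \<open>span D\<close> along \<open>E\<close> is bounded, so the \<open>D\<close>-component of a small element is
    small, hence zero.\<close>
  obtain e where e: "e > 0" "\<And>x. x \<in> D \<Longrightarrow> norm x < e \<Longrightarrow> x = 0"
    using closed_decompD(3)[OF dec] unfolding discrete_add_subgroup_iff[OF closed_decompD(2)[OF dec]]
    by blast
  obtain P where P: "linear P" "\<And>e s. e \<in> E \<Longrightarrow> s \<in> span D \<Longrightarrow> P (e + s) = s"
    using closed_decomp_projection[OF dec] by blast
  obtain C where C: "C > 0" "\<And>x. norm (P x) \<le> C * norm x" using linear_bounded_pos[OF P(1)] by blast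
  show ?thesis
  proof (rule that)
    show "e / C > 0" using e C by simp
  next
    fix z assume z: "z \<in> G" "norm z < e / C"
    then obtain a b where ab: "a \<in> E" "b \<in> D" "z = a + b"
      using closed_decompD(5)[OF dec] unfolding dsum_def by blast
    have "norm b \<le> C * norm z" using C(2)[of z] P(2) ab span_base by metis
    also have "\<dots> < e" using z C by (simp add: field_simps)
    finally have "b = 0" using e(2) ab by blast
    then show "z \<in> E" using ab by simp
  qed
qed

lemma closed_decomp_divisible_imp_mem:
  assumes dec: "closed_decomp G E D" and "z \<in> G" and div: "\<And>m::nat. m > 0 \<Longrightarrow> (1 / real m) *\<^sub>R z \<in> G"
  shows "z \<in> E"
proof -
  obtain \<epsilon> where \<epsilon>: "\<epsilon> > 0" "\<And>z. z \<in> G \<Longrightarrow> norm z < \<epsilon> \<Longrightarrow> z \<in> E"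
    using closed_decomp_small_imp_mem[OF dec] by blast
  obtain m :: nat where m: "norm z / \<epsilon> < real m" using reals_Archimedean2 by blast
  then have "m > 0" using \<epsilon>(1) by (metis divide_nonneg_pos norm_ge_zero not_gr0 of_nat_0 order.strict_trans1 less_irrefl)
  moreover then have "norm ((1 / real m) *\<^sub>R z) < \<epsilon>" using m \<epsilon>(1) by (simp add: field_simps)
  ultimately have "(1 / real m) *\<^sub>R z \<in> E" using \<epsilon>(2) div by blast
  then have "real m *\<^sub>R ((1 / real m) *\<^sub>R z) \<in> E" by (rule subspace_scale[OF closed_decompD(1)[OF dec]])
  then show ?thesis using \<open>m > 0\<close> by simp
qed

lemma closed_decomp_subspace_subset:
  assumes "closed_decomp G E D" "subspace V" "V \<subseteq> G" shows "V \<subseteq> E"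
  using closed_decomp_divisible_imp_mem[OF assms(1)] assms(2,3) by (meson subsetD subsetI subspace_scale)

lemma Re_cdim_eq_dim:
  fixes X W :: "'a::euclidean_space set"
  assumes "subspace W" "W \<subseteq> X" "\<And>V. subspace V \<Longrightarrow> V \<subseteq> X \<Longrightarrow> V \<subseteq> W"
  shows "Re (cdim X) = dim W"
proof -
  let ?dims = "{dim V |V. subspace V \<and> V \<subseteq> X}"
  have "finite ?dims"
    by (rule finite_subset[of _ "{..DIM('a)}"]) (auto simp: dim_subset_UNIV)
  moreover have "\<And>d. d \<in> ?dims \<Longrightarrow> d \<le> dim W" using assms(3) dim_subset by blast
  moreover have "dim W \<in> ?dims" using assms(1,2) by blast
  ultimately have "Max ?dims = dim W" by (rule Max_eqI)
  then show ?thesis by (simp add: cdim_def Let_def)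
qed

lemma Re_cdim_closed_decomp: "closed_decomp G E D \<Longrightarrow> Re (cdim G) = dim E"
  by (rule Re_cdim_eq_dim) (auto simp: closed_decompD(1) closed_decomp_subset closed_decomp_subspace_subset)

lemma cdim_eq_0_imp_subset_0:
  fixes X :: "'a::euclidean_space set"
  assumes "Re (cdim X) = 0" "Im (cdim X) = 0" shows "X \<subseteq> {0}"
proof -
  have "dim (span X) = 0" using assms by (simp add: cdim_def Let_def)
  then show ?thesis by simp
qed

section \<open>Homomorphisms of closed additive groups\<close>

text \<open>Taking \<open>p = 0\<close>, resp. \<open>c = 0\<close>, in the definition shows that both components of a closed
  homomorphism are restrictions of the map itself.\<close>

lemma closed_homD:
  assumes hom: "closed_hom E1 D1 E2 D2 g" and E1: "subspace E1" and D1: "add_subgroup D1"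
  shows "g ` E1 \<subseteq> E2" "g ` D1 \<subseteq> D2" "\<And>c x. x \<in> E1 \<Longrightarrow> g (c *\<^sub>R x) = c *\<^sub>R g x"
    "additive_on (dsum E1 D1) g"
proof -
  obtain g1 g2 where
    g1: "\<forall>x\<in>E1. g1 x \<in> E2" "\<forall>x\<in>E1. \<forall>y\<in>E1. \<forall>c. g1 (x + y) = g1 x + g1 y \<and> g1 (c *\<^sub>R x) = c *\<^sub>R g1 x"
    and g2: "\<forall>y\<in>D1. g2 y \<in> D2" "\<forall>y\<in>D1. \<forall>z\<in>D1. g2 (y + z) = g2 y + g2 z"
    and g: "\<And>c x p y. x \<in> E1 \<Longrightarrow> y \<in> D1 \<Longrightarrow> g (c *\<^sub>R x + of_int p *\<^sub>R y) = c *\<^sub>R g1 x + of_int p *\<^sub>R g2 y"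
    using hom unfolding closed_hom_def by blast
  have sum: "g (x + y) = g1 x + g2 y" if "x \<in> E1" "y \<in> D1" for x y
    using g[of x y 1 1] that by simp
  have gE: "g x = g1 x" if "x \<in> E1" for x
    using g[of x 0 1 0] that add_subgroup_0[OF D1] by simp
  have gD: "g y = g2 y" if "y \<in> D1" for y
    using g[of 0 y 0 1] that subspace_0[OF E1] by simp
  show "g ` E1 \<subseteq> E2" "g ` D1 \<subseteq> D2" using g1(1) g2(1) gE gD by auto
  show "g (c *\<^sub>R x) = c *\<^sub>R g x" if "x \<in> E1" for c x
    using g1(2) gE that subspace_scale[OF E1] by simp
  show "additive_on (dsum E1 D1) g"
    unfolding additive_on_def
  proof (intro ballI)
    fix u v assume "u \<in> dsum E1 D1" "v \<in> dsum E1 D1"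
    then obtain a b a' b' where ab: "a \<in> E1" "b \<in> D1" "a' \<in> E1" "b' \<in> D1" "u = a + b" "v = a' + b'"
      by (metis dsumE)
    have "g (u + v) = g ((a + a') + (b + b'))" using ab by (simp add: algebra_simps)
    also have "\<dots> = g1 (a + a') + g2 (b + b')"
      using sum ab subspace_add[OF E1] add_subgroup_add[OF D1] by simp
    also have "\<dots> = (g1 a + g2 b) + (g1 a' + g2 b')" using g1(2) g2(2) ab by (simp add: algebra_simps)
    also have "\<dots> = g u + g v" using sum ab by simp
    finally show "g (u + v) = g u + g v" .
  qed
qed

lemma closed_homI:
  assumes E1: "subspace E1" and D1: "add_subgroup D1"
    and "g ` E1 \<subseteq> E2" "g ` D1 \<subseteq> D2"
    and scale: "\<And>c x. x \<in> E1 \<Longrightarrow> g (c *\<^sub>R x) = c *\<^sub>R g x" and add: "additive_on (dsum E1 D1) g"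
  shows "closed_hom E1 D1 E2 D2 g"
proof -
  have H: "add_subgroup (dsum E1 D1)" by (rule add_subgroup_dsum[OF subspace_imp_add_subgroup[OF E1] D1])
  note sub = dsum_superset[OF E1 D1]
  have "g (c *\<^sub>R x + of_int p *\<^sub>R y) = c *\<^sub>R g x + of_int p *\<^sub>R g y" if "x \<in> E1" "y \<in> D1" for c x p y
  proof -
    have "c *\<^sub>R x \<in> dsum E1 D1" "y \<in> dsum E1 D1" using that sub subspace_scale[OF E1] by auto
    moreover have "of_int p *\<^sub>R y \<in> dsum E1 D1" using add_subgroup_scaleR_int[OF H] calculation(2) .
    ultimately show ?thesis
      using add additive_on_scaleR_int[OF H add] scale[OF \<open>x \<in> E1\<close>] unfolding additive_on_def by simp
  qed
  moreover have "g (x + y) = g x + g y" if "x \<in> E1 \<and> y \<in> E1 \<or> x \<in> D1 \<and> y \<in> D1" for x y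
    using that add sub unfolding additive_on_def by blast
  moreover have "g x \<in> E2" if "x \<in> E1" for x using that assms(3) by blast
  moreover have "g y \<in> D2" if "y \<in> D1" for y using that assms(4) by blast
  ultimately show ?thesis unfolding closed_hom_def using scale by (intro exI[of _ g]) simp
qed

lemma closed_hom_linear_extension:
  assumes g: "closed_hom E1 D1 E2 D2 g" and E1: "subspace E1" and D1: "add_subgroup D1"
  obtains L where "linear L" "\<And>x. x \<in> E1 \<Longrightarrow> L x = g x"
proof -
  have add: "g (x + y) = g x + g y" if "x \<in> E1" "y \<in> E1" for x y
    using closed_homD(4)[OF g E1 D1] dsum_superset(1)[OF E1 D1] that unfolding additive_on_def by blast
  show ?thesis by (rule linear_extension_on_subspace[OF E1 add closed_homD(3)[OF g E1 D1] that])
qed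

lemma closed_hom_kernel_subspace:
  assumes "closed_hom E1 D1 E2 D2 g" "subspace E1" "add_subgroup D1"
  shows "subspace {x \<in> E1. g x = 0}"
proof -
  obtain L where L: "linear L" "\<And>x. x \<in> E1 \<Longrightarrow> L x = g x"
    using closed_hom_linear_extension[OF assms] by blast
  have "{x \<in> E1. g x = 0} = E1 \<inter> {x. L x = 0}" using L(2) by auto
  then show ?thesis using subspace_inter[OF assms(2) linear_subspace_kernel[OF L(1)]] by simp
qed

lemma Re_cdim_kernel_on:
  assumes H: "closed_decomp H E D" and f: "closed_hom E D E' D' f"
  shows "Re (cdim (kernel_on H f)) = dim {x \<in> E. f x = 0}"
proof (rule Re_cdim_eq_dim)
  show "subspace {x \<in> E. f x = 0}" using closed_hom_kernel_subspace[OF f closed_decompD(1,2)[OF H]] .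
  show "{x \<in> E. f x = 0} \<subseteq> kernel_on H f" using closed_decomp_subset[OF H] unfolding kernel_on_def by auto
  fix V assume "subspace V" "V \<subseteq> kernel_on H f"
  then show "V \<subseteq> {x \<in> E. f x = 0}"
    using closed_decomp_subspace_subset[OF H] unfolding kernel_on_def by blast
qed

lemma closed_iso_if_inj_on:
  assumes E1: "subspace E1" and D1: "add_subgroup D1" and E2: "subspace E2" and D2: "add_subgroup D2"
    and hom: "closed_hom E1 D1 E2 D2 g" and inj: "inj_on g (dsum E1 D1)"
    and onto: "g ` E1 = E2" "g ` D1 = D2"
  shows "closed_iso E1 D1 E2 D2 g"
proof -
  note g = closed_homD(3,4)[OF hom E1 D1]
  note sub = dsum_superset[OF E1 D1]
  have image: "g ` dsum E1 D1 = dsum E2 D2"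
    using image_dsum[OF g(2) E1 D1] onto by simp
  define h where "h = inv_into (dsum E1 D1) g"
  have hg: "h (g x) = x" if "x \<in> dsum E1 D1" for x
    unfolding h_def using inv_into_f_f[OF inj that] .
  have gh: "g (h y) = y" if "y \<in> dsum E2 D2" for y
    unfolding h_def using that image f_inv_into_f by metis
  have h_add: "additive_on (dsum E2 D2) h"
    unfolding additive_on_def
  proof (intro ballI)
    fix y y' assume "y \<in> dsum E2 D2" "y' \<in> dsum E2 D2"
    then obtain x x' where "x \<in> dsum E1 D1" "x' \<in> dsum E1 D1" "y = g x" "y' = g x'"
      using image by blast
    moreover have "x + x' \<in> dsum E1 D1"
      using calculation add_subgroup_add[OF add_subgroup_dsum[OF subspace_imp_add_subgroup[OF E1] D1]]
      by blast
    ultimately show "h (y + y') = h y + h y'" using g(2) hg unfolding additive_on_def by metis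
  qed
  have h_image: "h ` E2 \<subseteq> E1" "h ` D2 \<subseteq> D1" using onto hg sub by auto
  have h_scale: "h (c *\<^sub>R y) = c *\<^sub>R h y" if y: "y \<in> E2" for c y
  proof -
    obtain x where "x \<in> E1" "y = g x" using y onto by blast
    then show ?thesis using g(1) hg sub E1 by (metis subsetD subspace_scale)
  qed
  have "closed_hom E2 D2 E1 D1 h" using h_image h_scale h_add by (intro closed_homI[OF E2 D2])
  then show ?thesis
    unfolding closed_iso_def using hom hg gh by (intro conjI exI[of _ h]) auto
qed

lemma closed_hom_inj_on_image:
  assumes H: "closed_decomp H E D" and K: "closed_decomp K E' D'"
    and f: "closed_hom E D E' D' f" and inj: "inj_on f H"
  shows "closed_decomp (f ` H) (f ` E) (f ` D) \<and> closed_iso E D (f ` E) (f ` D) f"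
proof -
  note E = closed_decompD(1)[OF H] and D = closed_decompD(2)[OF H]
  note fE = closed_homD(1)[OF f E D] and fD = closed_homD(2)[OF f E D]
    and scale = closed_homD(3)[OF f E D] and add = closed_homD(4)[OF f E D]
  obtain L where L: "linear L" "\<And>x. x \<in> E \<Longrightarrow> L x = f x"
    using closed_hom_linear_extension[OF f E D] by blast
  have "f ` E = L ` E" using L(2) by simp
  then have E2: "subspace (f ` E)" using linear_subspace_image[OF L(1) E] by simp
  have D2: "add_subgroup (f ` D)"
    using add_subgroup_image[OF D additive_on_subset[OF add dsum_superset(2)[OF E D]]] .
  have "f ` E \<inter> span (f ` D) \<subseteq> E' \<inter> span D'" using fE fD span_mono by blast
  then have "f ` E \<inter> span (f ` D) = {0}"
    using closed_decompD(4)[OF K] E2 subspace_0 span_zero by blast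
  moreover have "f ` H = dsum (f ` E) (f ` D)"
    using image_dsum[OF add E D] closed_decompD(5)[OF H] by simp
  ultimately have "closed_decomp (f ` H) (f ` E) (f ` D)"
    unfolding closed_decomp_def
    using E2 D2 discrete_subset[OF closed_decompD(3)[OF K] fD] by blast
  moreover have "closed_iso E D (f ` E) (f ` D) f"
  proof (rule closed_iso_if_inj_on[OF E D E2 D2])
    show "closed_hom E D (f ` E) (f ` D) f" using scale add by (intro closed_homI[OF E D]) auto
    show "inj_on f (dsum E D)" using inj closed_decompD(5)[OF H] by simp
  qed auto
  ultimately show ?thesis ..
qed

section \<open>Restriction to a supplement of the kernel\<close>

context
  fixes H E D K E' D' F :: "'a::euclidean_space set" and f :: "'a \<Rightarrow> 'a"
  assumes H: "closed_decomp H E D" and K: "closed_decomp K E' D'"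
    and f: "closed_hom E D E' D' f" and onto: "f ` H = K"
    and F: "closed_add_subgroup F" and supp: "supplement_defect0 F (kernel_on H f) H"
begin

lemma supplement_setup:
  shows "add_subgroup F" "F \<subseteq> H" "additive_on H f" "\<And>c x. x \<in> E \<Longrightarrow> f (c *\<^sub>R x) = c *\<^sub>R f x"
proof -
  show "add_subgroup F" using F unfolding closed_add_subgroup_def by blast
  show "F \<subseteq> H" using supp unfolding supplement_defect0_def by blast
  show "additive_on H f" using closed_homD(4)[OF f closed_decompD(1,2)[OF H]] closed_decompD(5)[OF H] by simp
  show "\<And>c x. x \<in> E \<Longrightarrow> f (c *\<^sub>R x) = c *\<^sub>R f x" using closed_homD(3)[OF f closed_decompD(1,2)[OF H]] .
qed

lemma supplement_kernel_eq_0: "x \<in> F \<Longrightarrow> f x = 0 \<Longrightarrow> x = 0"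
  using supp cdim_eq_0_imp_subset_0 supplement_setup(2) unfolding supplement_defect0_def kernel_on_def by blast

lemma supplement_inj_on: "inj_on f F"
  using additive_on_inj_on_iff[OF supplement_setup(1) additive_on_subset[OF supplement_setup(3,2)]]
    supplement_kernel_eq_0 by blast

lemma supplement_image: "f ` F = K"
proof
  show "f ` F \<subseteq> K" using supplement_setup(2) onto by blast
next
  show "K \<subseteq> f ` F"
  proof
    fix k assume "k \<in> K"
    then obtain z where "z \<in> H" "k = f z" using onto by blast
    then obtain a n where an: "a \<in> F" "n \<in> kernel_on H f" "z = a + n"
      using supp unfolding supplement_defect0_def by (metis dsumE)
    then have "f z = f a + f n"
      using supplement_setup(2,3) unfolding additive_on_def kernel_on_def by blast
    then show "k \<in> f ` F" using an \<open>k = f z\<close> unfolding kernel_on_def by simp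
  qed
qed

lemma supplement_preimage_divisible:
  assumes z: "z \<in> F \<inter> f -` E'" and "m > 0" shows "(1 / real m) *\<^sub>R z \<in> F"
proof -
  \<comment> \<open>\<open>f z / m \<in> E' \<subseteq> K\<close> has a preimage \<open>w \<in> F\<close>, and injectivity of \<open>f\<close> on \<open>F\<close> forces \<open>m w = z\<close>.\<close>
  have "(1 / real m) *\<^sub>R f z \<in> K"
    using z closed_decomp_subset[OF K] subspace_scale[OF closed_decompD(1)[OF K]] by blast
  then obtain w where w: "w \<in> F" "f w = (1 / real m) *\<^sub>R f z" using supplement_image by (metis imageE)
  have "f (of_int (int m) *\<^sub>R w) = of_int (int m) *\<^sub>R f w"
    using additive_on_scaleR_int[OF supplement_setup(1) additive_on_subset[OF supplement_setup(3,2)] w(1)] .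
  then have "f (real m *\<^sub>R w) = f z" using w(2) \<open>m > 0\<close> by simp
  moreover have "real m *\<^sub>R w \<in> F" using add_subgroup_scaleR_nat[OF supplement_setup(1) w(1)] .
  ultimately have "real m *\<^sub>R w = z" using z inj_onD[OF supplement_inj_on] by blast
  then have "w = (1 / real m) *\<^sub>R z" using \<open>m > 0\<close> by auto
  then show ?thesis using w(1) by simp
qed

lemma supplement_preimage_subset: "F \<inter> f -` E' \<subseteq> E"
proof
  fix z assume z: "z \<in> F \<inter> f -` E'"
  show "z \<in> E"
    using closed_decomp_divisible_imp_mem[OF H] z supplement_preimage_divisible supplement_setup(2) by blast
qed

lemma supplement_subspace_preimage: "subspace (F \<inter> f -` E')"
proof -
  have G: "add_subgroup (F \<inter> f -` E')"
    using add_subgroup_Int_vimage[OF supplement_setup(1) additive_on_subset[OF supplement_setup(3,2)]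
        subspace_imp_add_subgroup[OF closed_decompD(1)[OF K]]] .
  have "c *\<^sub>R z \<in> F \<inter> f -` E'" if z: "z \<in> F \<inter> f -` E'" for c z
  proof -
    have "c *\<^sub>R z \<in> F"
      using closed_add_subgroup_divisible_imp_scaleR[OF F _ supplement_preimage_divisible[OF z]] z by blast
    moreover have "f (c *\<^sub>R z) \<in> E'"
      using z supplement_preimage_subset supplement_setup(4) subspace_scale[OF closed_decompD(1)[OF K]] by auto
    ultimately show ?thesis by simp
  qed
  then show ?thesis using add_subgroup_0[OF G] add_subgroup_add[OF G] unfolding subspace_def by blast
qed

lemma supplement_add_subgroup_preimage: "add_subgroup (F \<inter> f -` D')"
  using add_subgroup_Int_vimage[OF supplement_setup(1) additive_on_subset[OF supplement_setup(3,2)]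
      closed_decompD(2)[OF K]] .

lemma supplement_discrete_preimage: "discrete (F \<inter> f -` D')"
proof -
  obtain \<epsilon> where \<epsilon>: "\<epsilon> > 0" "\<And>z. z \<in> H \<Longrightarrow> norm z < \<epsilon> \<Longrightarrow> z \<in> E"
    using closed_decomp_small_imp_mem[OF H] by blast
  have "z = 0" if z: "z \<in> F \<inter> f -` D'" "norm z < \<epsilon>" for z
  proof -
    have "z \<in> E" using \<epsilon>(2) z supplement_setup(2) by blast
    then have "f z \<in> E'" using closed_homD(1)[OF f closed_decompD(1,2)[OF H]] by blast
    then have "f z = 0" using closed_decomp_subspace_Int_eq_0[OF K] z by blast
    then show "z = 0" using supplement_kernel_eq_0 z by blast
  qed
  then show ?thesis
    unfolding discrete_add_subgroup_iff[OF supplement_add_subgroup_preimage] using \<epsilon>(1) by blast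
qed

lemma supplement_preimage_Int_span: "(F \<inter> f -` E') \<inter> span (F \<inter> f -` D') = {0}"
proof -
  define N where "N = {x \<in> E. f x = 0}"
  have N: "subspace N" unfolding N_def by (rule closed_hom_kernel_subspace[OF f closed_decompD(1,2)[OF H]])
  \<comment> \<open>If \<open>a + b \<in> F\<close> with \<open>a \<in> E\<close>, \<open>b \<in> D\<close> is mapped into \<open>D'\<close>, then \<open>f a \<in> E' \<inter> D' = 0\<close>.\<close>
  have "F \<inter> f -` D' \<subseteq> dsum N (span D)"
  proof
    fix z assume z: "z \<in> F \<inter> f -` D'"
    then obtain a b where ab: "a \<in> E" "b \<in> D" "z = a + b"
      using supplement_setup(2) closed_decompD(5)[OF H] by (blast elim: dsumE)
    have "f a \<in> D'"
    proof -
      have "f z = f a + f b"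
        using ab supplement_setup(3) closed_decomp_subset[OF H] unfolding additive_on_def by blast
      moreover have "f b \<in> D'" using ab(2) closed_homD(2)[OF f closed_decompD(1,2)[OF H]] by blast
      ultimately show ?thesis using z add_subgroup_diff[OF closed_decompD(2)[OF K]] by force
    qed
    moreover have "f a \<in> E'" using ab(1) closed_homD(1)[OF f closed_decompD(1,2)[OF H]] by blast
    ultimately have "a \<in> N" using closed_decomp_subspace_Int_eq_0[OF K] ab(1) unfolding N_def by simp
    then show "z \<in> dsum N (span D)" using ab by (simp add: dsumI span_base)
  qed
  then have span: "span (F \<inter> f -` D') \<subseteq> dsum N (span D)"
    using subspace_sums[OF N subspace_span] by (intro span_minimal) (simp_all add: dsum_def)
  have "x = 0" if x: "x \<in> F \<inter> f -` E'" "x \<in> span (F \<inter> f -` D')" for x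
  proof -
    obtain n s where ns: "n \<in> N" "s \<in> span D" "x = n + s" using x(2) span by (blast elim: dsumE)
    have "x \<in> E" using x(1) supplement_preimage_subset by blast
    then have "x = n" using closed_decomp_sum_unique[OF H, of x n 0 s] ns span_zero unfolding N_def by auto
    then show "x = 0" using ns(1) x(1) supplement_kernel_eq_0 unfolding N_def by auto
  qed
  moreover have "0 \<in> (F \<inter> f -` E') \<inter> span (F \<inter> f -` D')"
    using subspace_0[OF supplement_subspace_preimage] span_zero by blast
  ultimately show ?thesis by blast
qed

lemma supplement_image_preimage:
  assumes "B \<subseteq> K" shows "f ` (F \<inter> f -` B) = B"
  using assms supplement_image by blast

lemma supplement_eq_dsum: "F = dsum (F \<inter> f -` E') (F \<inter> f -` D')"
proof
  show "F \<subseteq> dsum (F \<inter> f -` E') (F \<inter> f -` D')"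
  proof
    fix z assume z: "z \<in> F"
    then have "f z \<in> K" using supplement_image by blast
    then obtain e d where ed: "e \<in> E'" "d \<in> D'" "f z = e + d"
      using closed_decompD(5)[OF K] by (blast elim: dsumE)
    obtain u v where u: "u \<in> F" "f u = e" and v: "v \<in> F" "f v = d"
      using ed(1,2) closed_decomp_subset[OF K] supplement_image by (metis imageE subsetD)
    have "u + v \<in> F" using u v add_subgroup_add[OF supplement_setup(1)] by blast
    moreover have "f (u + v) = f z"
      using u v ed supplement_setup(2,3) unfolding additive_on_def by auto
    ultimately have "z = u + v" using z inj_onD[OF supplement_inj_on] by metis
    then show "z \<in> dsum (F \<inter> f -` E') (F \<inter> f -` D')" using u v ed by (simp add: dsumI)
  qed
  show "dsum (F \<inter> f -` E') (F \<inter> f -` D') \<subseteq> F"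
    using supplement_setup(1) unfolding add_subgroup_def by (auto elim!: dsumE)
qed

lemma supplement_closed_decomp: "closed_decomp F (F \<inter> f -` E') (F \<inter> f -` D')"
  unfolding closed_decomp_def
  by (intro conjI supplement_subspace_preimage supplement_add_subgroup_preimage
      supplement_discrete_preimage supplement_preimage_Int_span supplement_eq_dsum)

lemma supplement_closed_iso: "closed_iso (F \<inter> f -` E') (F \<inter> f -` D') E' D' f"
proof (rule closed_iso_if_inj_on[OF supplement_subspace_preimage supplement_add_subgroup_preimage
      closed_decompD(1,2)[OF K]])
  have "additive_on (dsum (F \<inter> f -` E') (F \<inter> f -` D')) f"
    using additive_on_subset[OF supplement_setup(3,2)] supplement_eq_dsum by simp
  then show "closed_hom (F \<inter> f -` E') (F \<inter> f -` D') E' D' f"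
    using supplement_preimage_subset supplement_setup(4)
    by (intro closed_homI[OF supplement_subspace_preimage supplement_add_subgroup_preimage]) auto
  show "inj_on f (dsum (F \<inter> f -` E') (F \<inter> f -` D'))"
    using supplement_inj_on supplement_eq_dsum by simp
  show "f ` (F \<inter> f -` E') = E'" "f ` (F \<inter> f -` D') = D'"
    using closed_decomp_subset[OF K] by (simp_all add: supplement_image_preimage)
qed

lemma supplement_dim_preimage: "dim (F \<inter> f -` E') = dim E'"
proof -
  obtain L where L: "linear L" "\<And>x. x \<in> E \<Longrightarrow> L x = f x"
    using closed_hom_linear_extension[OF f closed_decompD(1,2)[OF H]] by blast
  note EF = supplement_subspace_preimage supplement_preimage_subset
  have "L ` (F \<inter> f -` E') = f ` (F \<inter> f -` E')" using EF(2) L(2) by (intro image_cong) auto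
  then have image: "L ` (F \<inter> f -` E') = E'"
    using supplement_image_preimage closed_decomp_subset[OF K] by simp
  have "inj_on L (F \<inter> f -` E')"
    using inj_on_subset[OF supplement_inj_on, of "F \<inter> f -` E'"] EF(2) L(2)
    unfolding inj_on_def by (metis Int_lower1 subsetD)
  then show ?thesis using dim_image_eq[OF L(1)] image span_eq_iff[THEN iffD2, OF EF(1)] by metis
qed

lemma supplement_dim: "dim E = dim E' + dim {x \<in> E. f x = 0}"
proof -
  note E = closed_decompD(1,2)[OF H]
  define EF where "EF = F \<inter> f -` E'"
  define N where "N = {x \<in> E. f x = 0}"
  have EF: "subspace EF" "EF \<subseteq> E" "f ` EF = E'"
    unfolding EF_def using supplement_subspace_preimage supplement_preimage_subset
      supplement_image_preimage closed_decomp_subset[OF K] by auto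
  have N: "subspace N" unfolding N_def using closed_hom_kernel_subspace[OF f E] .
  have "E = {x + y |x y. x \<in> EF \<and> y \<in> N}"
  proof (intro equalityI subsetI)
    fix a assume a: "a \<in> E"
    then have "f a \<in> E'" using closed_homD(1)[OF f E] by blast
    then obtain u where u: "u \<in> EF" "f u = f a" using EF(3) by (metis imageE)
    have "f (a - u) = f a - f u"
      using additive_on_diff[OF closed_decomp_add_subgroup[OF H] supplement_setup(3)] a u(1) EF(2)
        closed_decomp_subset[OF H] by blast
    then have "a - u \<in> N" using a u EF(2) subspace_diff[OF E(1)] unfolding N_def by auto
    then show "a \<in> {x + y |x y. x \<in> EF \<and> y \<in> N}" using u(1) by force
  next
    fix z assume "z \<in> {x + y |x y. x \<in> EF \<and> y \<in> N}"
    then show "z \<in> E" using EF(2) subspace_add[OF E(1)] unfolding N_def by blast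
  qed
  moreover have "EF \<inter> N = {0}"
    using supplement_kernel_eq_0 subspace_0[OF EF(1)] subspace_0[OF N] unfolding N_def EF_def by auto
  ultimately have "dim E = dim EF + dim N" using dim_sums_Int[OF EF(1) N] by simp
  then show ?thesis using supplement_dim_preimage unfolding EF_def N_def by simp
qed

lemma supplement_Re_cdim: "Re (cdim K) = Re (cdim H) - Re (cdim (kernel_on H f))"
  using Re_cdim_closed_decomp[OF H] Re_cdim_closed_decomp[OF K] Re_cdim_kernel_on[OF H f] supplement_dim
  by simp

end

theorem proposition4p3:
  fixes H K E D E' D' :: "(real ^ 'n) set" and f :: "real ^ 'n \<Rightarrow> real ^ 'n"
  assumes "closed_add_subgroup H" and "closed_decomp H E D"
    and "closed_add_subgroup K" and "closed_decomp K E' D'"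
    and "closed_hom E D E' D' f"
  shows "(inj_on f H \<longrightarrow>
            (\<exists>E'' D''. closed_add_subgroup (f ` H) \<and> closed_decomp (f ` H) E'' D''
                \<and> closed_iso E D E'' D'' f))
       \<and> (\<forall>F. f ` H = K \<and> closed_add_subgroup F \<and> supplement_defect0 F (kernel_on H f) H \<longrightarrow>
            (\<exists>EF DF. closed_decomp F EF DF \<and> closed_iso EF DF E' D' f)
            \<and> Re (cdim K) = Re (cdim H) - Re (cdim (kernel_on H f)))"
proof (intro conjI impI allI)
  assume "inj_on f H"
  then show "\<exists>E'' D''. closed_add_subgroup (f ` H) \<and> closed_decomp (f ` H) E'' D''
                \<and> closed_iso E D E'' D'' f"
    using closed_hom_inj_on_image[OF assms(2,4,5)] closed_decomp_imp_closed_add_subgroup by blast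
next
  fix F assume "f ` H = K \<and> closed_add_subgroup F \<and> supplement_defect0 F (kernel_on H f) H"
  then have "f ` H = K" "closed_add_subgroup F" "supplement_defect0 F (kernel_on H f) H" by simp_all
  note supplement = assms(2,4,5) this
  show "\<exists>EF DF. closed_decomp F EF DF \<and> closed_iso EF DF E' D' f"
    using supplement_closed_decomp[OF supplement] supplement_closed_iso[OF supplement] by blast
  show "Re (cdim K) = Re (cdim H) - Re (cdim (kernel_on H f))"
    by (rule supplement_Re_cdim[OF supplement])
qed

end
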